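(* Let $P$ be a finite connected poset such that $J(P)$ is tCDE with edge density $c=\mathbb{E}(\mathrm{uni}_{J(P)};\mathrm{ddeg})$. Then the antichain cardinality statistic $I\mapsto\#\max(I)$ has average exactly $c$ along every orbit of rowmotion $\Phi_{\mathrm{row}}$ acting on $J(P)$. If moreover $P$ is ranked with maximum rank $r$, then the same holds for every orbit of $\Phi_{\mathrm{row}(\sigma)}$ acting on $J(P)$, for every permutation $\sigma$ of $\{0,1,\ldots,r\}$.
   Context: $J(P)$ is the lattice of order ideals of $P$ under inclusion; $\mathrm{ddeg}(I)$ (the number of elements covered by $I$) equals $\#\max(I)$; $\mathrm{uni}$ is uniform. $\mathcal{T}^+_p(I)=1$ iff $p\notin I$ and $p$ minimal in $P\setminus I$; $\mathcal{T}^-_p(I)=1$ iff $p\in I$ and $p$ maximal in $I$. $\mu$ is toggle-symmetric if $\mathbb{E}(\mu;\mathcal{T}^+_p)=\mathbb{E}(\mu;\mathcal{T}^-_p)$ for all $p$; $J(P)$ is tCDE if $\mathbb{E}(\mu;\mathrm{ddeg})=\mathbb{E}(\mathrm{uni}_{J(P)};\mathrm{ddeg})$ for every toggle-symmetric $\mu$. Rowmotion: $\Phi_{\mathrm{row}}(I):=\{x\in P: x\le y\text{ for some }y\in\min(P\setminus I)\}$. For ranked $P$ (rank function with $0$ in its image, increasing by 1 along covers), the toggle $\tau_p$ adds $p$ to $I$ if $p\notin I$ is minimal in $P\setminus I$, removes $p$ if $p\in I$ is maximal in $I$, and otherwise fixes $I$; $\tau_i$ is the composition of all $\tau_p$ with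 $\mathrm{rk}(p)=i$; $\Phi_{\mathrm{row}(\sigma)}:=\tau_{\sigma(0)}\circ\cdots\circ\tau_{\sigma(r)}$. *)

theory Defs
  imports Complex_Main
begin

definition is_poset :: "'a set \<Rightarrow> ('a \<Rightarrow> 'a \<Rightarrow> bool) \<Rightarrow> bool" where
  "is_poset P le \<longleftrightarrow>
     (\<forall>x\<in>P. le x x) \<and>
     (\<forall>x\<in>P. \<forall>y\<in>P. le x y \<and> le y x \<longrightarrow> x = y) \<and>
     (\<forall>x\<in>P. \<forall>y\<in>P. \<forall>z\<in>P. le x y \<and> le y z \<longrightarrow> le x z)"

definition comparability :: "'a set \<Rightarrow> ('a \<Rightarrow> 'a \<Rightarrow> bool) \<Rightarrow> ('a \<times> 'a) set" where
  "comparability P le = {(x, y). x \<in> P \<and> y \<in> P \<and> (le x y \<or> le y x)}"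

definition poset_connected :: "'a set \<Rightarrow> ('a \<Rightarrow> 'a \<Rightarrow> bool) \<Rightarrow> bool" where
  "poset_connected P le \<longleftrightarrow> (\<forall>x\<in>P. \<forall>y\<in>P. (x, y) \<in> (comparability P le)\<^sup>*)"

definition order_ideals :: "'a set \<Rightarrow> ('a \<Rightarrow> 'a \<Rightarrow> bool) \<Rightarrow> 'a set set" where
  "order_ideals P le = {I. I \<subseteq> P \<and> (\<forall>x\<in>I. \<forall>y\<in>P. le y x \<longrightarrow> y \<in> I)}"

definition maximal_elts :: "('a \<Rightarrow> 'a \<Rightarrow> bool) \<Rightarrow> 'a set \<Rightarrow> 'a set" where
  "maximal_elts le S = {x\<in>S. \<forall>y\<in>S. le x y \<longrightarrow> y = x}"

definition minimal_elts :: "('a \<Rightarrow> 'a \<Rightarrow> bool) \<Rightarrow> 'a set \<Rightarrow> 'a set" where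
  "minimal_elts le S = {x\<in>S. \<forall>y\<in>S. le y x \<longrightarrow> y = x}"

definition ddeg :: "('a \<Rightarrow> 'a \<Rightarrow> bool) \<Rightarrow> 'a set \<Rightarrow> nat" where
  "ddeg le I = card (maximal_elts le I)"

definition tplus :: "'a set \<Rightarrow> ('a \<Rightarrow> 'a \<Rightarrow> bool) \<Rightarrow> 'a \<Rightarrow> 'a set \<Rightarrow> real" where
  "tplus P le p I = (if p \<notin> I \<and> p \<in> minimal_elts le (P - I) then 1 else 0)"

definition tminus :: "('a \<Rightarrow> 'a \<Rightarrow> bool) \<Rightarrow> 'a \<Rightarrow> 'a set \<Rightarrow> real" where
  "tminus le p I = (if p \<in> I \<and> p \<in> maximal_elts le I then 1 else 0)"

definition is_distribution :: "'a set \<Rightarrow> ('a \<Rightarrow> 'a \<Rightarrow> bool) \<Rightarrow> ('a set \<Rightarrow> real) \<Rightarrow> bool" where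
  "is_distribution P le \<mu> \<longleftrightarrow>
     (\<forall>I\<in>order_ideals P le. \<mu> I \<ge> 0) \<and> (\<Sum>I\<in>order_ideals P le. \<mu> I) = 1"

definition expect :: "'a set \<Rightarrow> ('a \<Rightarrow> 'a \<Rightarrow> bool) \<Rightarrow> ('a set \<Rightarrow> real) \<Rightarrow> ('a set \<Rightarrow> real) \<Rightarrow> real" where
  "expect P le \<mu> f = (\<Sum>I\<in>order_ideals P le. \<mu> I * f I)"

definition uniform :: "'a set \<Rightarrow> ('a \<Rightarrow> 'a \<Rightarrow> bool) \<Rightarrow> 'a set \<Rightarrow> real" where
  "uniform P le I = 1 / real (card (order_ideals P le))"

definition toggle_symmetric :: "'a set \<Rightarrow> ('a \<Rightarrow> 'a \<Rightarrow> bool) \<Rightarrow> ('a set \<Rightarrow> real) \<Rightarrow> bool" where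
  "toggle_symmetric P le \<mu> \<longleftrightarrow>
     (\<forall>p\<in>P. expect P le \<mu> (tplus P le p) = expect P le \<mu> (tminus le p))"

definition tCDE :: "'a set \<Rightarrow> ('a \<Rightarrow> 'a \<Rightarrow> bool) \<Rightarrow> bool" where
  "tCDE P le \<longleftrightarrow>
     (\<forall>\<mu>. is_distribution P le \<mu> \<and> toggle_symmetric P le \<mu> \<longrightarrow>
        expect P le \<mu> (\<lambda>I. real (ddeg le I)) = expect P le (uniform P le) (\<lambda>I. real (ddeg le I)))"

definition rowmotion :: "'a set \<Rightarrow> ('a \<Rightarrow> 'a \<Rightarrow> bool) \<Rightarrow> 'a set \<Rightarrow> 'a set" where
  "rowmotion P le I = {x\<in>P. \<exists>y\<in>minimal_elts le (P - I). le x y}"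

definition orbit_of :: "('b \<Rightarrow> 'b) \<Rightarrow> 'b \<Rightarrow> 'b set" where
  "orbit_of f x = {(f ^^ k) x | k. True}"

definition orbit_avg :: "('b \<Rightarrow> 'b) \<Rightarrow> ('b \<Rightarrow> real) \<Rightarrow> 'b \<Rightarrow> real" where
  "orbit_avg f g x = (\<Sum>y\<in>orbit_of f x. g y) / real (card (orbit_of f x))"

definition covers :: "'a set \<Rightarrow> ('a \<Rightarrow> 'a \<Rightarrow> bool) \<Rightarrow> 'a \<Rightarrow> 'a \<Rightarrow> bool" where
  "covers P le x y \<longleftrightarrow> x \<in> P \<and> y \<in> P \<and> le x y \<and> x \<noteq> y \<and>
     \<not> (\<exists>z\<in>P. le x z \<and> le z y \<and> z \<noteq> x \<and> z \<noteq> y)"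

definition is_rank_function :: "'a set \<Rightarrow> ('a \<Rightarrow> 'a \<Rightarrow> bool) \<Rightarrow> ('a \<Rightarrow> nat) \<Rightarrow> bool" where
  "is_rank_function P le rk \<longleftrightarrow>
     (\<exists>x\<in>P. rk x = 0) \<and> (\<forall>x\<in>P. \<forall>y\<in>P. covers P le x y \<longrightarrow> rk y = rk x + 1)"

definition toggle :: "'a set \<Rightarrow> ('a \<Rightarrow> 'a \<Rightarrow> bool) \<Rightarrow> 'a \<Rightarrow> 'a set \<Rightarrow> 'a set" where
  "toggle P le p I =
     (if p \<notin> I \<and> p \<in> minimal_elts le (P - I) then insert p I
      else if p \<in> I \<and> p \<in> maximal_elts le I then I - {p}
      else I)"

text \<open>tau_i: composition of all toggles tau_p with rk p = i (taken in some enumeration order;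
  these toggles pairwise commute).\<close>
definition rank_toggle :: "'a set \<Rightarrow> ('a \<Rightarrow> 'a \<Rightarrow> bool) \<Rightarrow> ('a \<Rightarrow> nat) \<Rightarrow> nat \<Rightarrow> 'a set \<Rightarrow> 'a set" where
  "rank_toggle P le rk i =
     fold (toggle P le) (SOME xs. distinct xs \<and> set xs = {p\<in>P. rk p = i})"

text \<open>Phi_row(sigma) = tau_{sigma 0} o ... o tau_{sigma r}.\<close>
definition row_sigma :: "'a set \<Rightarrow> ('a \<Rightarrow> 'a \<Rightarrow> bool) \<Rightarrow> ('a \<Rightarrow> nat) \<Rightarrow> nat \<Rightarrow> (nat \<Rightarrow> nat)
    \<Rightarrow> 'a set \<Rightarrow> 'a set" where
  "row_sigma P le rk r \<sigma> I = foldr (\<lambda>i. rank_toggle P le rk (\<sigma> i)) [0..<Suc r] I"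

end

theory Submission
  imports Defs
begin

text \<open>
Rowmotion and every \<open>\<Phi>\<^sub>r\<^sub>o\<^sub>w\<^sub>(\<^sub>\<sigma>\<^sub>)\<close> permute \<open>J(P)\<close>, so the uniform distribution on one of
their orbits is a distribution on \<open>J(P)\<close>; by tCDE its expected \<open>ddeg\<close> is \<open>c\<close> as soon as it
is toggle-symmetric. For rowmotion, \<open>T\<^sup>+\<^sub>p(I) = T\<^sup>-\<^sub>p(\<Phi>\<^sub>r\<^sub>o\<^sub>w(I))\<close> because the maximal
elements of \<open>\<Phi>\<^sub>r\<^sub>o\<^sub>w(I)\<close> are the minimal elements of \<open>P - I\<close>. For \<open>\<Phi>\<^sub>r\<^sub>o\<^sub>w\<^sub>(\<^sub>\<sigma>\<^sub>)\<close>, the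
toggles of one rank commute and toggling the rank of \<open>p\<close> swaps \<open>T\<^sup>+\<^sub>p\<close> and \<open>T\<^sup>-\<^sub>p\<close>; as \<open>p\<close>
enters an ideal of an orbit exactly as often as it leaves one, \<open>T\<^sup>+\<^sub>p\<close> and \<open>T\<^sup>-\<^sub>p\<close> have
equal orbit sums just before the rank of \<open>p\<close> is toggled. The lower (upper) covers of \<open>p\<close>
all lie in the rank below (above), so \<open>T\<^sup>+\<^sub>p\<close> (\<open>T\<^sup>-\<^sub>p\<close>) is unchanged either by the
toggles before that moment or by those after it, and in both cases its orbit sum is
the one just before the moment.
\<close>

lemma orbit_of_subset:
  assumes "f ` A \<subseteq> A" and "x \<in> A"
  shows "orbit_of f x \<subseteq> A"
proof -
  have "(f ^^ k) x \<in> A" for k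
    by (induction k) (use assms in auto)
  then show ?thesis
    unfolding orbit_of_def by auto
qed

lemma self_in_orbit_of: "x \<in> orbit_of f x"
  unfolding orbit_of_def by (auto intro!: exI[of _ 0])

lemma image_orbit_of_subset: "f ` orbit_of f x \<subseteq> orbit_of f x"
proof
  fix y assume "y \<in> f ` orbit_of f x"
  then obtain k where "y = (f ^^ Suc k) x"
    unfolding orbit_of_def by auto
  then show "y \<in> orbit_of f x"
    unfolding orbit_of_def by blast
qed

lemma bij_betw_orbit_of:
  assumes "finite A" and "f ` A \<subseteq> A" and "inj_on f A" and "x \<in> A"
  shows "bij_betw f (orbit_of f x) (orbit_of f x)"
proof -
  have sub: "orbit_of f x \<subseteq> A"
    using assms(2,4) by (rule orbit_of_subset)
  then have "f ` orbit_of f x = orbit_of f x"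
    using assms(1,3) image_orbit_of_subset[of f x]
    by (intro endo_inj_surj) (auto intro: finite_subset inj_on_subset)
  then show ?thesis
    using inj_on_subset[OF assms(3) sub] by (simp add: bij_betw_def)
qed

definition uniform_on :: "'b set \<Rightarrow> 'b \<Rightarrow> real" where
  "uniform_on S x = (if x \<in> S then 1 / real (card S) else 0)"

locale finite_poset =
  fixes P :: "'a set" and le :: "'a \<Rightarrow> 'a \<Rightarrow> bool"
  assumes finite_P: "finite P" and is_poset: "is_poset P le"
begin

lemma poset_refl: "x \<in> P \<Longrightarrow> le x x"
  using is_poset unfolding is_poset_def by blast

lemma poset_antisym: "x \<in> P \<Longrightarrow> y \<in> P \<Longrightarrow> le x y \<Longrightarrow> le y x \<Longrightarrow> x = y"
  using is_poset unfolding is_poset_def by blast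

lemma poset_trans: "x \<in> P \<Longrightarrow> y \<in> P \<Longrightarrow> z \<in> P \<Longrightarrow> le x y \<Longrightarrow> le y z \<Longrightarrow> le x z"
  using is_poset unfolding is_poset_def by blast

lemma ideal_subset: "J \<in> order_ideals P le \<Longrightarrow> J \<subseteq> P"
  unfolding order_ideals_def by auto

lemma ideal_down_closed:
  "J \<in> order_ideals P le \<Longrightarrow> x \<in> J \<Longrightarrow> y \<in> P \<Longrightarrow> le y x \<Longrightarrow> y \<in> J"
  unfolding order_ideals_def by auto

lemma finite_order_ideals: "finite (order_ideals P le)"
proof -
  have "order_ideals P le \<subseteq> Pow P"
    unfolding order_ideals_def by auto
  then show ?thesis
    using finite_P by (auto intro: finite_subset)
qed

definition down_card :: "'a \<Rightarrow> nat" where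
  "down_card z = card {w\<in>P. le w z}"

lemma down_card_strict_mono:
  assumes "x \<in> P" "y \<in> P" "le x y" "x \<noteq> y"
  shows "down_card x < down_card y"
proof -
  have "{w\<in>P. le w x} \<subset> {w\<in>P. le w y}"
    using assms poset_trans poset_antisym poset_refl by blast
  then show ?thesis
    unfolding down_card_def using finite_P by (intro psubset_card_mono) auto
qed

lemma ex_minimal_below:
  assumes "S \<subseteq> P" and "x \<in> S"
  shows "\<exists>a\<in>minimal_elts le S. le a x"
proof -
  obtain a where a: "a \<in> S" "le a x"
    and least: "\<And>b. b \<in> S \<Longrightarrow> le b x \<Longrightarrow> down_card a \<le> down_card b"
    using ex_has_least_nat[of "\<lambda>a. a \<in> S \<and> le a x" x down_card] assms poset_refl by blast
  have "b = a" if b: "b \<in> S" "le b a" for b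
  proof (rule ccontr)
    assume "b \<noteq> a"
    have "b \<in> P" "a \<in> P" "x \<in> P" using assms a b by auto
    then have "le b x" "down_card b < down_card a"
      using poset_trans[of b a x] down_card_strict_mono[of b a] a b \<open>b \<noteq> a\<close> by auto
    then show False using least[of b] b by simp
  qed
  then show ?thesis
    using a unfolding minimal_elts_def by blast
qed

lemma ex_maximal_above:
  assumes "S \<subseteq> P" and "x \<in> S"
  shows "\<exists>a\<in>maximal_elts le S. le x a"
proof -
  have bounded: "down_card y < Suc (card P)" for y
    unfolding down_card_def using finite_P by (simp add: card_mono le_imp_less_Suc)
  obtain a where a: "a \<in> S" "le x a"
    and greatest: "\<And>b. b \<in> S \<Longrightarrow> le x b \<Longrightarrow> down_card b \<le> down_card a"
    using Lattices_Big.ex_has_greatest_nat[of "\<lambda>a. a \<in> S \<and> le x a" x down_card] assms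
      poset_refl bounded by blast
  have "b = a" if b: "b \<in> S" "le a b" for b
  proof (rule ccontr)
    assume "b \<noteq> a"
    have "b \<in> P" "a \<in> P" "x \<in> P" using assms a b by auto
    then have "le x b" "down_card a < down_card b"
      using poset_trans[of x a b] down_card_strict_mono[of a b] a b \<open>b \<noteq> a\<close> by auto
    then show False using greatest[of b] b by simp
  qed
  then show ?thesis
    using a unfolding maximal_elts_def by blast
qed

lemma ex_cover_below:
  assumes "y \<in> P" "p \<in> P" "le y p" "y \<noteq> p"
  shows "\<exists>z\<in>P. le y z \<and> covers P le z p"
proof -
  let ?S = "{z\<in>P. le y z \<and> le z p \<and> z \<noteq> p}"
  obtain z where z: "z \<in> maximal_elts le ?S" "le y z"
    using ex_maximal_above[of ?S y] assms poset_refl by auto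
  have "covers P le z p"
    using z assms poset_trans[of y z] unfolding maximal_elts_def covers_def by blast
  then show ?thesis
    using z unfolding maximal_elts_def by auto
qed

lemma ex_cover_above:
  assumes "y \<in> P" "p \<in> P" "le p y" "y \<noteq> p"
  shows "\<exists>z\<in>P. le z y \<and> covers P le p z"
proof -
  let ?S = "{z\<in>P. le p z \<and> le z y \<and> z \<noteq> p}"
  obtain z where z: "z \<in> minimal_elts le ?S" "le z y"
    using ex_minimal_below[of ?S y] assms poset_refl by auto
  have "covers P le p z"
    using z assms poset_trans[of _ z y] unfolding minimal_elts_def covers_def by blast
  then show ?thesis
    using z unfolding minimal_elts_def by auto
qed

lemma tplus_via_covers:
  assumes J: "J \<in> order_ideals P le" and p: "p \<in> P"
  shows "tplus P le p J = of_bool (p \<notin> J \<and> (\<forall>y\<in>P. covers P le y p \<longrightarrow> y \<in> J))"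
proof -
  have "p \<in> minimal_elts le (P - J) \<longleftrightarrow> (\<forall>y\<in>P. covers P le y p \<longrightarrow> y \<in> J)" if "p \<notin> J"
  proof
    assume "p \<in> minimal_elts le (P - J)"
    then show "\<forall>y\<in>P. covers P le y p \<longrightarrow> y \<in> J"
      unfolding minimal_elts_def covers_def by auto
  next
    assume below: "\<forall>y\<in>P. covers P le y p \<longrightarrow> y \<in> J"
    have "y = p" if y: "y \<in> P - J" "le y p" for y
    proof (rule ccontr)
      assume "y \<noteq> p"
      then obtain z where "z \<in> P" "le y z" "covers P le z p"
        using ex_cover_below y p by blast
      then show False
        using below ideal_down_closed[OF J] y by blast
    qed
    then show "p \<in> minimal_elts le (P - J)"
      using p \<open>p \<notin> J\<close> unfolding minimal_elts_def by auto
  qed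
  then show ?thesis
    unfolding tplus_def by auto
qed

lemma tminus_via_covers:
  assumes J: "J \<in> order_ideals P le" and p: "p \<in> P"
  shows "tminus le p J = of_bool (p \<in> J \<and> (\<forall>y\<in>P. covers P le p y \<longrightarrow> y \<notin> J))"
proof -
  have "p \<in> maximal_elts le J \<longleftrightarrow> (\<forall>y\<in>P. covers P le p y \<longrightarrow> y \<notin> J)" if "p \<in> J"
  proof
    assume "p \<in> maximal_elts le J"
    then show "\<forall>y\<in>P. covers P le p y \<longrightarrow> y \<notin> J"
      unfolding maximal_elts_def covers_def by auto
  next
    assume above: "\<forall>y\<in>P. covers P le p y \<longrightarrow> y \<notin> J"
    have "y = p" if y: "y \<in> J" "le p y" for y
    proof (rule ccontr)
      assume "y \<noteq> p"
      then obtain z where "z \<in> P" "le z y" "covers P le p z"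
        using ex_cover_above y p ideal_subset[OF J] by blast
      then show False
        using above ideal_down_closed[OF J] y by blast
    qed
    then show "p \<in> maximal_elts le J"
      using \<open>p \<in> J\<close> unfolding maximal_elts_def by auto
  qed
  then show ?thesis
    unfolding tminus_def by auto
qed

lemma expect_uniform_on:
  assumes "S \<subseteq> order_ideals P le"
  shows "expect P le (uniform_on S) g = (\<Sum>K\<in>S. g K) / real (card S)"
proof -
  have "expect P le (uniform_on S) g
      = (\<Sum>K\<in>order_ideals P le. if K \<in> S then g K / real (card S) else 0)"
    unfolding expect_def uniform_on_def by (intro sum.cong) auto
  also have "\<dots> = (\<Sum>K\<in>order_ideals P le \<inter> S. g K / real (card S))"
    using finite_order_ideals by (simp add: sum.inter_restrict)
  also have "order_ideals P le \<inter> S = S"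
    using assms by auto
  finally show ?thesis
    by (simp add: sum_divide_distrib)
qed

lemma is_distribution_uniform_on:
  assumes "S \<subseteq> order_ideals P le" and "S \<noteq> {}"
  shows "is_distribution P le (uniform_on S)"
proof -
  have "finite S"
    using assms(1) finite_order_ideals by (rule finite_subset)
  then have "expect P le (uniform_on S) (\<lambda>_. 1) = 1"
    using assms by (simp add: expect_uniform_on)
  then show ?thesis
    unfolding is_distribution_def expect_def uniform_on_def by simp
qed

lemma toggle_symmetric_uniform_on:
  assumes "S \<subseteq> order_ideals P le"
    and "\<And>p. p \<in> P \<Longrightarrow> (\<Sum>K\<in>S. tplus P le p K) = (\<Sum>K\<in>S. tminus le p K)"
  shows "toggle_symmetric P le (uniform_on S)"
  unfolding toggle_symmetric_def expect_uniform_on[OF assms(1)] using assms(2) by simp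

lemma tCDE_orbit_avg:
  assumes "tCDE P le"
    and maps: "f ` order_ideals P le \<subseteq> order_ideals P le"
    and inj: "inj_on f (order_ideals P le)"
    and orbit_sums: "\<And>S p. S \<subseteq> order_ideals P le \<Longrightarrow> bij_betw f S S \<Longrightarrow> p \<in> P \<Longrightarrow>
        (\<Sum>K\<in>S. tplus P le p K) = (\<Sum>K\<in>S. tminus le p K)"
    and I: "I \<in> order_ideals P le"
  shows "orbit_avg f (\<lambda>K. real (ddeg le K)) I
    = expect P le (uniform P le) (\<lambda>K. real (ddeg le K))"
proof -
  let ?O = "orbit_of f I"
  have O: "?O \<subseteq> order_ideals P le"
    using maps I by (rule orbit_of_subset)
  have "bij_betw f ?O ?O"
    using finite_order_ideals maps inj I by (rule bij_betw_orbit_of)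
  then have "toggle_symmetric P le (uniform_on ?O)"
    using O orbit_sums[OF O] by (intro toggle_symmetric_uniform_on)
  moreover have "is_distribution P le (uniform_on ?O)"
    using O self_in_orbit_of[of I f] by (intro is_distribution_uniform_on) auto
  ultimately have "expect P le (uniform_on ?O) (\<lambda>K. real (ddeg le K))
      = expect P le (uniform P le) (\<lambda>K. real (ddeg le K))"
    using \<open>tCDE P le\<close> unfolding tCDE_def by blast
  then show ?thesis
    unfolding expect_uniform_on[OF O] orbit_avg_def by simp
qed

subsection \<open>Rowmotion\<close>

lemma rowmotion_in_ideals: "rowmotion P le J \<in> order_ideals P le"
  using poset_trans unfolding rowmotion_def order_ideals_def minimal_elts_def by blast

lemma maximal_elts_rowmotion: "maximal_elts le (rowmotion P le J) = minimal_elts le (P - J)"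
proof
  show "maximal_elts le (rowmotion P le J) \<subseteq> minimal_elts le (P - J)"
  proof
    fix x assume x: "x \<in> maximal_elts le (rowmotion P le J)"
    then obtain y where y: "y \<in> minimal_elts le (P - J)" "le x y"
      unfolding maximal_elts_def rowmotion_def by auto
    then have "y \<in> rowmotion P le J"
      using poset_refl unfolding rowmotion_def minimal_elts_def by auto
    then show "x \<in> minimal_elts le (P - J)"
      using x y unfolding maximal_elts_def by auto
  qed
next
  show "minimal_elts le (P - J) \<subseteq> maximal_elts le (rowmotion P le J)"
  proof
    fix a assume a: "a \<in> minimal_elts le (P - J)"
    then have aP: "a \<in> P"
      unfolding minimal_elts_def by auto
    have "y = a" if y: "y \<in> rowmotion P le J" "le a y" for y
    proof -
      obtain b where b: "b \<in> minimal_elts le (P - J)" "le y b" "y \<in> P"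
        using y unfolding rowmotion_def by auto
      then have "b \<in> P" "le a b"
        using poset_trans[of a y b] aP y unfolding minimal_elts_def by auto
      then have "a = b"
        using a b unfolding minimal_elts_def by auto
      then show "y = a"
        using poset_antisym[of y a] b y aP by auto
    qed
    moreover have "a \<in> rowmotion P le J"
      using a aP poset_refl unfolding rowmotion_def by auto
    ultimately show "a \<in> maximal_elts le (rowmotion P le J)"
      unfolding maximal_elts_def by auto
  qed
qed

lemma tplus_eq_tminus_rowmotion: "tplus P le p J = tminus le p (rowmotion P le J)"
proof -
  have "p \<in> maximal_elts le (rowmotion P le J) \<longleftrightarrow> p \<notin> J \<and> p \<in> minimal_elts le (P - J)"
    unfolding maximal_elts_rowmotion by (auto simp: minimal_elts_def)
  then show ?thesis
    unfolding tplus_def tminus_def by (auto simp: maximal_elts_def)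
qed

lemma mem_ideal_iff:
  assumes J: "J \<in> order_ideals P le"
  shows "x \<in> J \<longleftrightarrow> x \<in> P \<and> \<not> (\<exists>a\<in>minimal_elts le (P - J). le a x)"
proof
  assume "x \<in> J"
  then show "x \<in> P \<and> \<not> (\<exists>a\<in>minimal_elts le (P - J). le a x)"
    using ideal_subset[OF J] ideal_down_closed[OF J] unfolding minimal_elts_def by blast
next
  assume "x \<in> P \<and> \<not> (\<exists>a\<in>minimal_elts le (P - J). le a x)"
  then show "x \<in> J"
    using ex_minimal_below[of "P - J" x] by blast
qed

lemma inj_on_rowmotion: "inj_on (rowmotion P le) (order_ideals P le)"
proof (rule inj_onI)
  fix J K
  assume "J \<in> order_ideals P le" "K \<in> order_ideals P le"
    and "rowmotion P le J = rowmotion P le K"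
  moreover from this have "minimal_elts le (P - J) = minimal_elts le (P - K)"
    by (metis maximal_elts_rowmotion)
  ultimately show "J = K"
    using mem_ideal_iff by blast
qed

lemma orbit_avg_rowmotion:
  assumes "tCDE P le" and "I \<in> order_ideals P le"
  shows "orbit_avg (rowmotion P le) (\<lambda>K. real (ddeg le K)) I
    = expect P le (uniform P le) (\<lambda>K. real (ddeg le K))"
proof (rule tCDE_orbit_avg[OF assms(1) _ inj_on_rowmotion _ assms(2)])
  show "rowmotion P le ` order_ideals P le \<subseteq> order_ideals P le"
    using rowmotion_in_ideals by blast
next
  fix S p assume "bij_betw (rowmotion P le) S S"
  then show "(\<Sum>K\<in>S. tplus P le p K) = (\<Sum>K\<in>S. tminus le p K)"
    unfolding tplus_eq_tminus_rowmotion by (rule sum.reindex_bij_betw)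
qed

subsection \<open>Toggles\<close>

lemma mem_toggle_other: "q \<noteq> x \<Longrightarrow> q \<in> toggle P le x J \<longleftrightarrow> q \<in> J"
  unfolding toggle_def by auto

lemma toggle_indicator:
  "of_bool (x \<in> toggle P le x J) = of_bool (x \<in> J) + tplus P le x J - tminus le x J"
  unfolding toggle_def tplus_def tminus_def by auto

lemma toggle_in_ideals:
  assumes J: "J \<in> order_ideals P le" and x: "x \<in> P"
  shows "toggle P le x J \<in> order_ideals P le"
proof (cases "x \<notin> J \<and> x \<in> minimal_elts le (P - J)")
  case True
  then have "toggle P le x J = insert x J"
    unfolding toggle_def by simp
  then show ?thesis
    using True J x unfolding order_ideals_def minimal_elts_def by auto
next
  case not_addable: False
  show ?thesis
  proof (cases "x \<in> J \<and> x \<in> maximal_elts le J")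
    case True
    then have "toggle P le x J = J - {x}"
      using not_addable unfolding toggle_def by simp
    then show ?thesis
      using True J unfolding order_ideals_def maximal_elts_def by auto
  next
    case False
    then show ?thesis
      using not_addable J unfolding toggle_def by auto
  qed
qed

lemma toggle_toggle:
  assumes J: "J \<in> order_ideals P le" and x: "x \<in> P"
  shows "toggle P le x (toggle P le x J) = J"
proof (cases "x \<notin> J \<and> x \<in> minimal_elts le (P - J)")
  case True
  moreover have "x \<in> maximal_elts le (insert x J)"
    using True ideal_down_closed[OF J] x unfolding maximal_elts_def minimal_elts_def by auto
  ultimately show ?thesis
    unfolding toggle_def by auto
next
  case not_addable: False
  show ?thesis
  proof (cases "x \<in> J \<and> x \<in> maximal_elts le J")
    case True
    moreover have "x \<in> minimal_elts le (P - (J - {x}))"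
      using True ideal_down_closed[OF J] x unfolding minimal_elts_def maximal_elts_def by auto
    ultimately show ?thesis
      using not_addable unfolding toggle_def by auto
  next
    case False
    then show ?thesis
      using not_addable unfolding toggle_def by auto
  qed
qed

lemma tplus_cong:
  assumes "q \<in> P" and "\<forall>y\<in>P. le y q \<longrightarrow> (y \<in> J \<longleftrightarrow> y \<in> J')"
  shows "tplus P le q J = tplus P le q J'"
  using assms poset_refl unfolding tplus_def minimal_elts_def by auto

lemma tminus_cong:
  assumes "q \<in> P" and "J \<subseteq> P" and "J' \<subseteq> P"
    and "\<forall>y\<in>P. le q y \<longrightarrow> (y \<in> J \<longleftrightarrow> y \<in> J')"
  shows "tminus le q J = tminus le q J'"
  using assms poset_refl unfolding tminus_def maximal_elts_def by (simp add: subset_iff) blast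

lemma mem_fold_toggle_other: "q \<notin> set xs \<Longrightarrow> q \<in> fold (toggle P le) xs J \<longleftrightarrow> q \<in> J"
  by (induction xs arbitrary: J) (simp_all add: mem_toggle_other)

lemma fold_toggle_in_ideals:
  "set xs \<subseteq> P \<Longrightarrow> J \<in> order_ideals P le \<Longrightarrow> fold (toggle P le) xs J \<in> order_ideals P le"
  by (induction xs arbitrary: J) (auto simp: toggle_in_ideals)

lemma inj_on_fold_toggle:
  "set xs \<subseteq> P \<Longrightarrow> inj_on (fold (toggle P le) xs) (order_ideals P le)"
proof (induction xs)
  case Nil
  then show ?case by simp
next
  case (Cons x xs)
  then have "inj_on (toggle P le x) (order_ideals P le)"
    using toggle_toggle by (intro inj_on_inverseI[of _ "toggle P le x"]) auto
  moreover have "toggle P le x ` order_ideals P le \<subseteq> order_ideals P le"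
    using Cons.prems toggle_in_ideals by auto
  ultimately have "inj_on (fold (toggle P le) xs \<circ> toggle P le x) (order_ideals P le)"
    using Cons.IH Cons.prems by (auto intro: comp_inj_on inj_on_subset[of "fold (toggle P le) xs"])
  then show ?case
    by (simp add: comp_def)
qed

lemma tplus_tminus_toggle_incomparable:
  assumes J: "J \<in> order_ideals P le" and "q \<in> P" "x \<in> P" "\<not> le x q" "\<not> le q x"
  shows "tplus P le q (toggle P le x J) = tplus P le q J"
    and "tminus le q (toggle P le x J) = tminus le q J"
proof -
  have same: "y \<in> toggle P le x J \<longleftrightarrow> y \<in> J" if "le y q \<or> le q y" for y
    using that assms(4,5) mem_toggle_other by metis
  show "tplus P le q (toggle P le x J) = tplus P le q J"
    using same assms(2) by (intro tplus_cong) auto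
  show "tminus le q (toggle P le x J) = tminus le q J"
    using same assms(2) ideal_subset[OF J] ideal_subset[OF toggle_in_ideals[OF J assms(3)]]
    by (intro tminus_cong) auto
qed

lemma fold_toggle_antichain_indicator:
  assumes "distinct xs" and "set xs \<subseteq> P"
    and "\<forall>a\<in>set xs. \<forall>b\<in>set xs. le a b \<longrightarrow> a = b"
    and "J \<in> order_ideals P le" and "q \<in> set xs"
  shows "of_bool (q \<in> fold (toggle P le) xs J) = of_bool (q \<in> J) + tplus P le q J - tminus le q J"
  using assms
proof (induction xs arbitrary: J)
  case Nil
  then show ?case by simp
next
  case (Cons x xs)
  show ?case
  proof (cases "q = x")
    case True
    then have "q \<notin> set xs"
      using Cons.prems(1) by simp
    then show ?thesis
      using True toggle_indicator mem_fold_toggle_other by simp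
  next
    case False
    then have q: "q \<in> set xs" "\<not> le x q" "\<not> le q x"
      using Cons.prems by auto
    have J': "toggle P le x J \<in> order_ideals P le"
      using Cons.prems toggle_in_ideals by auto
    have "of_bool (q \<in> fold (toggle P le) xs (toggle P le x J))
        = of_bool (q \<in> toggle P le x J) + tplus P le q (toggle P le x J)
          - tminus le q (toggle P le x J)"
      using Cons.prems by (intro Cons.IH[OF _ _ _ J' q(1)]) auto
    moreover have "q \<in> P" "x \<in> P"
      using Cons.prems q(1) by auto
    ultimately show ?thesis
      using tplus_tminus_toggle_incomparable[OF Cons.prems(4) _ _ q(2,3)] mem_toggle_other[OF False] by simp
  qed
qed

end

subsection \<open>Ranked posets\<close>

locale ranked_poset = finite_poset +
  fixes rk :: "'a \<Rightarrow> nat"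
  assumes is_rank_function: "is_rank_function P le rk"
begin

lemma rank_cover: "covers P le x y \<Longrightarrow> rk y = rk x + 1"
  using is_rank_function unfolding is_rank_function_def covers_def by blast

lemma rank_strict_mono: "x \<in> P \<Longrightarrow> y \<in> P \<Longrightarrow> le x y \<Longrightarrow> x \<noteq> y \<Longrightarrow> rk x < rk y"
proof (induction "down_card y" arbitrary: y rule: less_induct)
  case less
  obtain z where z: "z \<in> P" "le x z" "covers P le z y"
    using ex_cover_below[OF less.prems] by blast
  then have "rk y = rk z + 1"
    using rank_cover by blast
  moreover have "rk x \<le> rk z"
  proof (cases "x = z")
    case False
    have "down_card z < down_card y"
      using z less.prems(2) down_card_strict_mono unfolding covers_def by blast
    then show ?thesis
      using less.hyps[of z] less.prems(1) z False by fastforce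
  qed simp
  ultimately show ?case
    by simp
qed

lemma same_rank_antichain:
  "\<forall>a\<in>{p\<in>P. rk p = j}. \<forall>b\<in>{p\<in>P. rk p = j}. le a b \<longrightarrow> a = b"
  using rank_strict_mono by fastforce

lemma rank_toggle_eq_fold:
  obtains xs where "distinct xs" "set xs = {p\<in>P. rk p = j}"
    "rank_toggle P le rk j = fold (toggle P le) xs"
proof -
  have "\<exists>xs. distinct xs \<and> set xs = {p\<in>P. rk p = j}"
    using finite_distinct_list[of "{p\<in>P. rk p = j}"] finite_P by auto
  from someI_ex[OF this] show ?thesis
    using that unfolding rank_toggle_def by blast
qed

lemma rank_toggle_in_ideals:
  "J \<in> order_ideals P le \<Longrightarrow> rank_toggle P le rk j J \<in> order_ideals P le"
  by (rule rank_toggle_eq_fold[of j]) (auto simp: fold_toggle_in_ideals)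

lemma inj_on_rank_toggle: "inj_on (rank_toggle P le rk j) (order_ideals P le)"
  by (rule rank_toggle_eq_fold[of j]) (auto simp: inj_on_fold_toggle)

lemma mem_rank_toggle_other: "rk q \<noteq> j \<Longrightarrow> q \<in> rank_toggle P le rk j J \<longleftrightarrow> q \<in> J"
  by (rule rank_toggle_eq_fold[of j]) (auto simp: mem_fold_toggle_other)

lemma rank_toggle_indicator:
  assumes "J \<in> order_ideals P le" and "p \<in> P"
  shows "of_bool (p \<in> rank_toggle P le rk (rk p) J)
    = of_bool (p \<in> J) + tplus P le p J - tminus le p J"
proof (rule rank_toggle_eq_fold[of "rk p"])
  fix xs assume "distinct xs" "set xs = {q\<in>P. rk q = rk p}"
    and "rank_toggle P le rk (rk p) = fold (toggle P le) xs"
  then show ?thesis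
    using fold_toggle_antichain_indicator same_rank_antichain assms by auto
qed

lemma rank_toggle_swaps_tplus_tminus:
  assumes J: "J \<in> order_ideals P le" and p: "p \<in> P"
  shows "tplus P le p (rank_toggle P le rk (rk p) J) = tminus le p J"
    and "tminus le p (rank_toggle P le rk (rk p) J) = tplus P le p J"
proof -
  let ?J' = "rank_toggle P le rk (rk p) J"
  define below where "below K \<longleftrightarrow> (\<forall>y\<in>P. covers P le y p \<longrightarrow> y \<in> K)" for K
  define above where "above K \<longleftrightarrow> (\<forall>y\<in>P. covers P le p y \<longrightarrow> y \<notin> K)" for K
  have J': "?J' \<in> order_ideals P le"
    using J by (rule rank_toggle_in_ideals)
  have "y \<in> ?J' \<longleftrightarrow> y \<in> J" if "covers P le y p \<or> covers P le p y" for y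
    using that rank_cover mem_rank_toggle_other by fastforce
  then have unchanged: "below ?J' = below J" "above ?J' = above J"
    unfolding below_def above_def by auto
  have ideal_sides: "p \<in> J \<Longrightarrow> below J" "p \<notin> J \<Longrightarrow> above J"
    using ideal_down_closed[OF J] p unfolding below_def above_def covers_def by blast+
  moreover have "of_bool (p \<in> ?J') = of_bool (p \<in> J) + of_bool (p \<notin> J \<and> below J)
      - (of_bool (p \<in> J \<and> above J) :: real)"
    using rank_toggle_indicator[OF J p]
    unfolding tplus_via_covers[OF J p] tminus_via_covers[OF J p] below_def above_def .
  ultimately have "p \<in> ?J' \<longleftrightarrow> (if p \<in> J then \<not> above J else below J)"
    by (cases "p \<in> J"; cases "p \<in> ?J'") auto
  then show "tplus P le p ?J' = tminus le p J" and "tminus le p ?J' = tplus P le p J"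
    using unchanged ideal_sides
    unfolding tplus_via_covers[OF J p] tplus_via_covers[OF J' p]
      tminus_via_covers[OF J p] tminus_via_covers[OF J' p]
      below_def[symmetric] above_def[symmetric]
    by (auto split: if_splits)
qed

definition toggle_ranks :: "nat list \<Rightarrow> 'a set \<Rightarrow> 'a set" where
  "toggle_ranks js = foldr (rank_toggle P le rk) js"

lemma toggle_ranks_append_Cons:
  "toggle_ranks (A @ j # B) J = toggle_ranks A (rank_toggle P le rk j (toggle_ranks B J))"
  by (simp add: toggle_ranks_def)

lemma toggle_ranks_in_ideals:
  "J \<in> order_ideals P le \<Longrightarrow> toggle_ranks js J \<in> order_ideals P le"
  by (induction js) (simp_all add: toggle_ranks_def rank_toggle_in_ideals)

lemma inj_on_toggle_ranks: "inj_on (toggle_ranks js) (order_ideals P le)"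
proof (induction js)
  case Nil
  then show ?case by (simp add: toggle_ranks_def)
next
  case (Cons j js)
  have "toggle_ranks js ` order_ideals P le \<subseteq> order_ideals P le"
    using toggle_ranks_in_ideals by blast
  then have "inj_on (rank_toggle P le rk j \<circ> toggle_ranks js) (order_ideals P le)"
    using Cons.IH by (intro comp_inj_on inj_on_subset[OF inj_on_rank_toggle])
  then show ?case
    by (simp add: toggle_ranks_def comp_def)
qed

lemma mem_toggle_ranks_other: "rk q \<notin> set js \<Longrightarrow> q \<in> toggle_ranks js J \<longleftrightarrow> q \<in> J"
  by (induction js) (simp_all add: toggle_ranks_def mem_rank_toggle_other)

lemma tplus_toggle_ranks_other:
  assumes J: "J \<in> order_ideals P le" and p: "p \<in> P"
    and "rk p \<notin> set js" and "rk p - 1 \<notin> set js"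
  shows "tplus P le p (toggle_ranks js J) = tplus P le p J"
proof -
  have "y \<in> toggle_ranks js J \<longleftrightarrow> y \<in> J" if "y = p \<or> covers P le y p" for y
    using that assms(3,4) rank_cover mem_toggle_ranks_other by fastforce
  then show ?thesis
    unfolding tplus_via_covers[OF J p] tplus_via_covers[OF toggle_ranks_in_ideals[OF J] p] by auto
qed

lemma tminus_toggle_ranks_other:
  assumes J: "J \<in> order_ideals P le" and p: "p \<in> P"
    and "rk p \<notin> set js" and "rk p + 1 \<notin> set js"
  shows "tminus le p (toggle_ranks js J) = tminus le p J"
proof -
  have "y \<in> toggle_ranks js J \<longleftrightarrow> y \<in> J" if "y = p \<or> covers P le p y" for y
    using that assms(3,4) rank_cover mem_toggle_ranks_other by fastforce
  then show ?thesis
    unfolding tminus_via_covers[OF J p] tminus_via_covers[OF toggle_ranks_in_ideals[OF J] p] by auto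
qed

lemma sum_tplus_eq_sum_tminus_before_rank_toggle:
  assumes S: "S \<subseteq> order_ideals P le" and p: "p \<in> P"
    and bij: "bij_betw (toggle_ranks (A @ rk p # B)) S S"
    and "rk p \<notin> set A" and "rk p \<notin> set B"
  shows "(\<Sum>K\<in>S. tplus P le p (toggle_ranks B K)) = (\<Sum>K\<in>S. tminus le p (toggle_ranks B K))"
proof -
  let ?G = "toggle_ranks B"
  have "(\<Sum>K\<in>S. of_bool (p \<in> K) :: real) = (\<Sum>K\<in>S. of_bool (p \<in> toggle_ranks (A @ rk p # B) K))"
    by (rule sum.reindex_bij_betw[OF bij, of "\<lambda>K. of_bool (p \<in> K)", symmetric])
  also have "\<dots> = (\<Sum>K\<in>S. of_bool (p \<in> K) + tplus P le p (?G K) - tminus le p (?G K))"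
  proof (rule sum.cong[OF refl])
    fix K assume "K \<in> S"
    then have "?G K \<in> order_ideals P le"
      using S toggle_ranks_in_ideals by blast
    then show "of_bool (p \<in> toggle_ranks (A @ rk p # B) K)
        = of_bool (p \<in> K) + tplus P le p (?G K) - tminus le p (?G K)"
      using rank_toggle_indicator[OF _ p] mem_toggle_ranks_other assms(4,5)
      by (simp add: toggle_ranks_append_Cons)
  qed
  also have "\<dots> = (\<Sum>K\<in>S. of_bool (p \<in> K)) + (\<Sum>K\<in>S. tplus P le p (?G K))
      - (\<Sum>K\<in>S. tminus le p (?G K))"
    by (simp add: sum.distrib sum_subtractf)
  finally show ?thesis
    by simp
qed

lemma sum_tplus_eq_sum_tminus_toggle_ranks:
  assumes "distinct js" and p: "p \<in> P" and "rk p \<in> set js"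
    and S: "S \<subseteq> order_ideals P le" and bij: "bij_betw (toggle_ranks js) S S"
  shows "(\<Sum>K\<in>S. tplus P le p K) = (\<Sum>K\<in>S. tminus le p K)"
proof -
  obtain A B where js: "js = A @ rk p # B"
    using split_list[OF assms(3)] by blast
  then have A: "rk p \<notin> set A" and B: "rk p \<notin> set B" and AB: "set A \<inter> set B = {}"
    using assms(1) by auto
  let ?G = "toggle_ranks B"
  have G: "?G K \<in> order_ideals P le" if "K \<in> S" for K
    using that S toggle_ranks_in_ideals by blast
  have reindex: "(\<Sum>K\<in>S. g (toggle_ranks js K)) = (\<Sum>K\<in>S. g K)" for g :: "'a set \<Rightarrow> real"
    using bij by (rule sum.reindex_bij_betw)
  note rank_toggle_split = toggle_ranks_append_Cons[of A "rk p" B, folded js]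
  note balance = sum_tplus_eq_sum_tminus_before_rank_toggle[OF S p bij[unfolded js] A B]
  have "(\<Sum>K\<in>S. tplus P le p K) = (\<Sum>K\<in>S. tplus P le p (?G K))"
  proof (cases "rk p - 1 \<in> set B")
    case False
    then show ?thesis
      using S B p tplus_toggle_ranks_other by (intro sum.cong) auto
  next
    case True
    then have "rk p - 1 \<notin> set A"
      using AB by blast
    then have "(\<Sum>K\<in>S. tplus P le p (toggle_ranks js K)) = (\<Sum>K\<in>S. tminus le p (?G K))"
      unfolding rank_toggle_split using G p A tplus_toggle_ranks_other rank_toggle_in_ideals
        rank_toggle_swaps_tplus_tminus(1) by (intro sum.cong) auto
    then show ?thesis
      using reindex balance by simp
  qed
  moreover have "(\<Sum>K\<in>S. tminus le p K) = (\<Sum>K\<in>S. tminus le p (?G K))"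
  proof (cases "rk p + 1 \<in> set B")
    case False
    then show ?thesis
      using S B p tminus_toggle_ranks_other by (intro sum.cong) auto
  next
    case True
    then have "rk p + 1 \<notin> set A"
      using AB by blast
    then have "(\<Sum>K\<in>S. tminus le p (toggle_ranks js K)) = (\<Sum>K\<in>S. tplus P le p (?G K))"
      unfolding rank_toggle_split using G p A tminus_toggle_ranks_other rank_toggle_in_ideals
        rank_toggle_swaps_tplus_tminus(2) by (intro sum.cong) auto
    then show ?thesis
      using reindex balance by simp
  qed
  ultimately show ?thesis
    using balance by simp
qed

lemma orbit_avg_row_sigma:
  assumes "tCDE P le" and \<sigma>: "bij_betw \<sigma> {0..Max (rk ` P)} {0..Max (rk ` P)}"
    and "I \<in> order_ideals P le"
  shows "orbit_avg (row_sigma P le rk (Max (rk ` P)) \<sigma>) (\<lambda>K. real (ddeg le K)) I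
    = expect P le (uniform P le) (\<lambda>K. real (ddeg le K))"
proof -
  let ?js = "map \<sigma> [0..<Suc (Max (rk ` P))]"
  have row: "row_sigma P le rk (Max (rk ` P)) \<sigma> = toggle_ranks ?js"
    unfolding row_sigma_def toggle_ranks_def by (simp add: foldr_map comp_def fun_eq_iff)
  have upt: "set [0..<Suc (Max (rk ` P))] = {0..Max (rk ` P)}"
    by auto
  have distinct: "distinct ?js" and ranks: "set ?js = {0..Max (rk ` P)}"
    unfolding distinct_map set_map upt using \<sigma> by (simp_all add: bij_betw_def)
  show ?thesis
    unfolding row
  proof (rule tCDE_orbit_avg[OF assms(1) _ inj_on_toggle_ranks _ assms(3)])
    show "toggle_ranks ?js ` order_ideals P le \<subseteq> order_ideals P le"
      using toggle_ranks_in_ideals by blast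
  next
    fix S p
    assume "S \<subseteq> order_ideals P le" "bij_betw (toggle_ranks ?js) S S" "p \<in> P"
    moreover from \<open>p \<in> P\<close> have "rk p \<in> set ?js"
      unfolding ranks using finite_P by simp
    ultimately show "(\<Sum>K\<in>S. tplus P le p K) = (\<Sum>K\<in>S. tminus le p K)"
      using sum_tplus_eq_sum_tminus_toggle_ranks[OF distinct] by blast
  qed
qed

end

theorem corollary8p7:
  fixes P :: "'a set" and le :: "'a \<Rightarrow> 'a \<Rightarrow> bool"
  assumes "finite P" and "is_poset P le" and "poset_connected P le"
    and "tCDE P le"
  defines "c \<equiv> expect P le (uniform P le) (\<lambda>I. real (ddeg le I))"
  shows "(\<forall>I\<in>order_ideals P le.
            orbit_avg (rowmotion P le) (\<lambda>K. real (ddeg le K)) I = c)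
       \<and> (\<forall>rk \<sigma>. is_rank_function P le rk \<longrightarrow>
            bij_betw \<sigma> {0..Max (rk ` P)} {0..Max (rk ` P)} \<longrightarrow>
            (\<forall>I\<in>order_ideals P le.
               orbit_avg (row_sigma P le rk (Max (rk ` P)) \<sigma>) (\<lambda>K. real (ddeg le K)) I = c))"
proof -
  interpret finite_poset P le
    using assms(1,2) by unfold_locales
  show ?thesis
  proof (intro conjI allI impI ballI)
    fix I assume "I \<in> order_ideals P le"
    with assms(4) show "orbit_avg (rowmotion P le) (\<lambda>K. real (ddeg le K)) I = c"
      unfolding c_def by (rule orbit_avg_rowmotion)
  next
    fix rk \<sigma> I
    assume "is_rank_function P le rk"
      and \<sigma>: "bij_betw \<sigma> {0..Max (rk ` P)} {0..Max (rk ` P)}" and I: "I \<in> order_ideals P le"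
    then interpret ranked_poset P le rk
      by unfold_locales
    show "orbit_avg (row_sigma P le rk (Max (rk ` P)) \<sigma>) (\<lambda>K. real (ddeg le K)) I = c"
      unfolding c_def using assms(4) \<sigma> I by (rule orbit_avg_row_sigma)
  qed
qed

end
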